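(* Let $w\ge100$ and let $\tilde x:[0,1]\to\mathbb R$ solve $$\tilde x'(s)=(w+1)-w\tanh\bigl(s\,\tilde x(s)\bigr),\qquad \tilde x(0)=x.$$ If $x>-2w+26\ln w$, then $\tilde x(1)\ge0$.
   Context: This ODE is the (time-reparametrized, $T\to\infty$ limit of the) guided probability flow ODE with guidance parameter $w$ toward the component $z=+1$ for the Gaussian mixture $\frac12\mathcal N(1,1)+\frac12\mathcal N(-1,1)$; $\tilde x(1)$ is the output sample for initialization $x$. *)

theory Defs
  imports "HOL-Analysis.Analysis"
begin

end

theory Submission
  imports Defs
begin

text \<open>
  The drift \<open>(w + 1) - w tanh(s x)\<close> is always at least 1, so the trajectory increases.
  If it ended below 0 it would be negative throughout, the drift would be at least \<open>w + 1\<close>,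
  and hence \<open>x(s) \<le> -(w + 1)(1 - s)\<close>. With \<open>\<delta> = ln w / w\<close> this forces
  \<open>s x(s) \<le> -ln w / 2\<close> on \<open>[\<delta>, 1 - \<delta>]\<close>, where the drift is therefore at least \<open>2w - 1\<close>.
  Integrating gives \<open>x(1) \<ge> x + 2w - 1 - 4 ln w > 0\<close>, a contradiction.
\<close>

lemma increment_ge_of_derivative_ge:
  fixes f f' :: "real \<Rightarrow> real"
  assumes ab: "a \<le> b" and sub: "{a..b} \<subseteq> S"
    and deriv: "\<And>s. s \<in> {a..b} \<Longrightarrow> (f has_real_derivative f' s) (at s within S)"
    and bound: "\<And>s. s \<in> {a..b} \<Longrightarrow> m \<le> f' s"
  shows "m * (b - a) \<le> f b - f a"
proof -
  have "\<exists>s\<in>{a..b}. f b - f a = (\<lambda>h. f' s * h) (b - a)"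
  proof (rule mvt_very_simple[OF ab])
    fix s assume "a \<le> s" "s \<le> b"
    then have "(f has_real_derivative f' s) (at s within {a..b})"
      using deriv[of s] sub by (auto intro: has_field_derivative_subset)
    then show "(f has_derivative (\<lambda>h. f' s * h)) (at s within {a..b})"
      by (simp add: has_field_derivative_def)
  qed
  then obtain s where "s \<in> {a..b}" "f b - f a = f' s * (b - a)" by auto
  with bound[of s] ab show ?thesis by (simp add: mult_right_mono)
qed

lemma tanh_neg_half_ln:
  fixes w :: real
  assumes "0 < w"
  shows "tanh (- ln w / 2) = (1 - w) / (1 + w)"
proof -
  have "exp (- 2 * (- ln w / 2)) = w" using assms by (simp add: exp_ln)
  then show ?thesis by (simp add: tanh_real_altdef)
qed

lemma ln_le_half_self:
  fixes w :: real
  assumes "0 < w"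
  shows "ln w \<le> w / 2"
proof -
  have "ln w = 2 * ln (sqrt w)" using assms by (simp add: ln_sqrt)
  also have "\<dots> \<le> 2 * (sqrt w - 1)" using assms ln_le_minus_one[of "sqrt w"] by simp
  also have "\<dots> \<le> w / 2"
  proof -
    have "0 \<le> (sqrt w - 2) * (sqrt w - 2)" by simp
    moreover have "sqrt w * sqrt w = w" using assms by simp
    ultimately show ?thesis by (simp add: algebra_simps)
  qed
  finally show ?thesis .
qed

lemma guided_drift_ge_one:
  fixes w t :: real
  assumes "0 \<le> w"
  shows "1 \<le> (w + 1) - w * tanh t"
  using mult_left_mono[OF less_imp_le[OF tanh_real_lt_1[of t]] assms] by simp

lemma guided_drift_ge_of_nonpos:
  fixes w t :: real
  assumes "0 \<le> w" "t \<le> 0"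
  shows "w + 1 \<le> (w + 1) - w * tanh t"
  using assms by (simp add: mult_nonneg_nonpos)

lemma guided_drift_ge_on_middle:
  fixes w s y :: real
  assumes w: "1 \<le> w"
    and s: "ln w / w \<le> s" "s \<le> 1 - ln w / w"
    and y: "y \<le> - (w + 1) * (1 - s)"
  shows "2 * w - 1 \<le> (w + 1) - w * tanh (s * y)"
proof -
  define \<delta> where "\<delta> = ln w / w"
  have s\<delta>: "\<delta> \<le> s" "s \<le> 1 - \<delta>" using s by (simp_all add: \<delta>_def)
  have \<delta>: "0 \<le> \<delta>" "\<delta> \<le> 1 / 2" "w * \<delta> = ln w"
    using w s\<delta> by (simp add: \<delta>_def, linarith, simp add: \<delta>_def)
  have "\<delta> / 2 \<le> \<delta> * (1 - \<delta>)"
    using \<delta> mult_nonneg_nonneg[of \<delta> "1 / 2 - \<delta>"] by (simp add: algebra_simps)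
  also have "\<dots> \<le> s * (1 - s)"
    using s\<delta> mult_nonneg_nonneg[of "s - \<delta>" "(1 - \<delta>) - s"] by (simp add: algebra_simps)
  finally have gap: "\<delta> / 2 \<le> s * (1 - s)" .
  have "s * y \<le> - (w + 1) * (s * (1 - s))"
    using mult_left_mono[OF y, of s] \<delta> s\<delta> by (simp add: algebra_simps)
  also have "\<dots> \<le> - (w + 1) * (\<delta> / 2)" using gap w by (intro mult_left_mono_neg) auto
  also have "\<dots> \<le> - ln w / 2" using \<delta> by (simp add: algebra_simps)
  finally have "tanh (s * y) \<le> (1 - w) / (1 + w)"
    using tanh_neg_half_ln[of w] w by (metis less_le_trans tanh_real_le_iff zero_less_one)
  then have "w * tanh (s * y) \<le> w * ((1 - w) / (1 + w))"
    using w by (intro mult_left_mono) auto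
  moreover have "w + 1 - w * ((1 - w) / (1 + w)) = 2 * w - 1 + 2 / (w + 1)"
    using w by (simp add: field_simps)
  moreover have "0 < 2 / (w + 1)" using w by simp
  ultimately show ?thesis by linarith
qed

lemma guided_flow_le_if_end_negative:
  fixes w :: real and xt :: "real \<Rightarrow> real"
  assumes w: "0 \<le> w"
    and ode: "\<And>s. s \<in> {0..1} \<Longrightarrow>
       (xt has_real_derivative ((w + 1) - w * tanh (s * xt s))) (at s within {0..1})"
    and neg: "xt 1 < 0"
    and s: "s \<in> {0..1}"
  shows "xt s \<le> - (w + 1) * (1 - s)"
proof -
  have "t * xt t \<le> 0" if t: "t \<in> {0..1}" for t
  proof -
    have "1 * (1 - t) \<le> xt 1 - xt t"
      using t by (intro increment_ge_of_derivative_ge[OF _ _ ode] guided_drift_ge_one w) auto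
    with neg t show ?thesis by (simp add: mult_nonneg_nonpos)
  qed
  then have "(w + 1) * (1 - s) \<le> xt 1 - xt s"
    using s by (intro increment_ge_of_derivative_ge[OF _ _ ode] guided_drift_ge_of_nonpos w) auto
  with neg show ?thesis by (simp add: algebra_simps)
qed

lemma guided_flow_gain_if_end_negative:
  fixes w :: real and xt :: "real \<Rightarrow> real"
  assumes w: "1 \<le> w"
    and ode: "\<And>s. s \<in> {0..1} \<Longrightarrow>
       (xt has_real_derivative ((w + 1) - w * tanh (s * xt s))) (at s within {0..1})"
    and neg: "xt 1 < 0"
  shows "xt 0 + 2 * w - 1 - 4 * ln w \<le> xt 1"
proof -
  define \<delta> where "\<delta> = ln w / w"
  have \<delta>: "0 \<le> \<delta>" "\<delta> \<le> 1 / 2" "w * \<delta> = ln w"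
    using w ln_le_half_self[of w] by (auto simp: \<delta>_def field_simps)
  have rise_start: "1 * (\<delta> - 0) \<le> xt \<delta> - xt 0"
    using \<delta> w by (intro increment_ge_of_derivative_ge[OF _ _ ode] guided_drift_ge_one) auto
  have rise_middle: "(2 * w - 1) * ((1 - \<delta>) - \<delta>) \<le> xt (1 - \<delta>) - xt \<delta>"
  proof (rule increment_ge_of_derivative_ge[OF _ _ ode])
    fix s assume s: "s \<in> {\<delta>..1 - \<delta>}"
    with \<delta> have "xt s \<le> - (w + 1) * (1 - s)"
      using w by (intro guided_flow_le_if_end_negative[OF _ ode neg]) auto
    with s w show "2 * w - 1 \<le> (w + 1) - w * tanh (s * xt s)"
      unfolding \<delta>_def by (intro guided_drift_ge_on_middle) auto
  qed (use \<delta> in auto)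
  have rise_end: "1 * (1 - (1 - \<delta>)) \<le> xt 1 - xt (1 - \<delta>)"
    using \<delta> w by (intro increment_ge_of_derivative_ge[OF _ _ ode] guided_drift_ge_one) auto
  have "(2 * w - 1) * ((1 - \<delta>) - \<delta>) = 2 * w - 1 - 4 * ln w + 2 * \<delta>"
    using \<delta> by (simp add: algebra_simps)
  with rise_middle have "2 * w - 1 - 4 * ln w + 2 * \<delta> \<le> xt (1 - \<delta>) - xt \<delta>" by simp
  with rise_start rise_end \<delta> show ?thesis by simp
qed

theorem lemma4p1:
  fixes w x :: real and xt :: "real \<Rightarrow> real"
  assumes hw: "w \<ge> 100"
    and hode: "\<And>s. s \<in> {0..1} \<Longrightarrow>
       (xt has_real_derivative ((w + 1) - w * tanh (s * xt s))) (at s within {0..1})"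
    and hinit: "xt 0 = x"
    and hx: "x > - 2 * w + 26 * ln w"
  shows "xt 1 \<ge> 0"
proof (rule ccontr)
  assume "\<not> xt 1 \<ge> 0"
  then have "x + 2 * w - 1 - 4 * ln w \<le> xt 1"
    using guided_flow_gain_if_end_negative[OF _ hode] hw hinit by auto
  moreover have "1 \<le> ln w"
    using exp_le hw by (subst ln_ge_iff) auto
  ultimately show False using hx \<open>\<not> xt 1 \<ge> 0\<close> by linarith
qed

end
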